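(* Let $T$ be a $3\times2\times3$ quaternion tensor, i.e. $T=(A;B)$ with $A,B\in M_3(\mathbb{H})$. Then $\mathrm{rank}(T)\le4$.
   Context: $\mathbb{H}$ denotes the real quaternions. An $n_1\times n_2\times n_3$ quaternion tensor is an array $T=(T_{ijk})$ with entries in $\mathbb{H}$, $1\le i\le n_1$, $1\le j\le n_2$, $1\le k\le n_3$; it is written $T=(A_1;\dots;A_{n_2})$ where the frontal slice $A_j$ is the $n_1\times n_3$ matrix $(T_{ijk})_{i,k}$. A nonzero tensor is simple if $T_{ijk}=a_ib_jc_k$ (quaternion product in this order) for some $\vec a\in\mathbb{H}^{n_1},\vec b\in\mathbb{H}^{n_2},\vec c\in\mathbb{H}^{n_3}$. The rank of $T$ is the least number of simple tensors summing to $T$ (the zero tensor has rank $0$). *)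

theory Defs
  imports Complex_Main
begin

text \<open>The quaternions are not in the distribution library (only in HOL-ex / AFP),
so we define them here: q = Re + Im1 i + Im2 j + Im3 k with i^2=j^2=k^2=ijk=-1.\<close>

datatype quat = Quat (Re: real) (Im1: real) (Im2: real) (Im3: real)

lemma quat_eqI [intro?]:
  "\<lbrakk>Re x = Re y; Im1 x = Im1 y; Im2 x = Im2 y; Im3 x = Im3 y\<rbrakk> \<Longrightarrow> x = y"
  by (cases x, cases y) simp

lemma quat_eq_iff: "x = y \<longleftrightarrow> Re x = Re y \<and> Im1 x = Im1 y \<and> Im2 x = Im2 y \<and> Im3 x = Im3 y"
  by (auto intro: quat_eqI)

instantiation quat :: ring_1
begin

definition "0 = Quat 0 0 0 0"
definition "1 = Quat 1 0 0 0"
definition "x + y = Quat (Re x + Re y) (Im1 x + Im1 y) (Im2 x + Im2 y) (Im3 x + Im3 y)"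
definition "x - y = Quat (Re x - Re y) (Im1 x - Im1 y) (Im2 x - Im2 y) (Im3 x - Im3 y)"
definition "- x = Quat (- Re x) (- Im1 x) (- Im2 x) (- Im3 x)"
definition "x * y = Quat
   (Re x * Re y - Im1 x * Im1 y - Im2 x * Im2 y - Im3 x * Im3 y)
   (Re x * Im1 y + Im1 x * Re y + Im2 x * Im3 y - Im3 x * Im2 y)
   (Re x * Im2 y - Im1 x * Im3 y + Im2 x * Re y + Im3 x * Im1 y)
   (Re x * Im3 y + Im1 x * Im2 y - Im2 x * Im1 y + Im3 x * Re y)"

instance
  by standard
     (auto simp: quat_eq_iff zero_quat_def one_quat_def plus_quat_def minus_quat_def
        uminus_quat_def times_quat_def algebra_simps)

end

text \<open>An n1 x n2 x n3 quaternion tensor is a function T :: nat => nat => nat => quat,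
meaningful on indices i < n1, j < n2, k < n3 (0-based).  Entries outside the box are
ignored: equality of tensors is equality on the box.\<close>

definition is_simple_tensor :: "nat \<Rightarrow> nat \<Rightarrow> nat \<Rightarrow> (nat \<Rightarrow> nat \<Rightarrow> nat \<Rightarrow> quat) \<Rightarrow> bool" where
  "is_simple_tensor n1 n2 n3 T \<longleftrightarrow>
     (\<exists>i<n1. \<exists>j<n2. \<exists>k<n3. T i j k \<noteq> 0) \<and>
     (\<exists>a b c :: nat \<Rightarrow> quat. \<forall>i<n1. \<forall>j<n2. \<forall>k<n3. T i j k = a i * b j * c k)"

definition sum_of_simple :: "nat \<Rightarrow> nat \<Rightarrow> nat \<Rightarrow> nat \<Rightarrow> (nat \<Rightarrow> nat \<Rightarrow> nat \<Rightarrow> quat) \<Rightarrow> bool" where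
  "sum_of_simple n1 n2 n3 r T \<longleftrightarrow>
     (\<exists>S :: nat \<Rightarrow> nat \<Rightarrow> nat \<Rightarrow> nat \<Rightarrow> quat.
        (\<forall>l<r. is_simple_tensor n1 n2 n3 (S l)) \<and>
        (\<forall>i<n1. \<forall>j<n2. \<forall>k<n3. T i j k = (\<Sum>l<r. S l i j k)))"

definition tensor_rank :: "nat \<Rightarrow> nat \<Rightarrow> nat \<Rightarrow> (nat \<Rightarrow> nat \<Rightarrow> nat \<Rightarrow> quat) \<Rightarrow> nat" where
  "tensor_rank n1 n2 n3 T = (LEAST r. sum_of_simple n1 n2 n3 r T)"

end

theory Submission
  imports Defs
begin

text \<open>
  Writing \<open>T = (A; B)\<close>, the rank of \<open>T\<close> is the least \<open>r\<close> for which
  \<open>A = \<Sum>\<^sub>l a\<^sub>l \<beta>\<^sub>l c\<^sub>l\<close> and \<open>B = \<Sum>\<^sub>l a\<^sub>l \<gamma>\<^sub>l c\<^sub>l\<close> hold simultaneously (column \<open>a\<^sub>l\<close>, row \<open>c\<^sub>l\<close>).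
  This is invariant under \<open>(A, B) \<mapsto> (PAQ, PBQ)\<close> with \<open>P, Q\<close> invertible, so by pivoting
  \<open>A\<close> becomes \<open>0\<close>, \<open>E\<^sub>1\<^sub>1\<close>, \<open>diag(1,1,0)\<close> or \<open>I\<close>. In the first two cases \<open>B\<close> alone costs at
  most three terms. For \<open>A = I\<close> (resp. \<open>diag(1,1,0)\<close>) one (resp. two) rank-one corrections
  turn \<open>B\<close> into an upper triangular matrix whose diagonal entries are pairwise distinct and
  partly central. The Sylvester equations \<open>d x + u = x e\<close> with \<open>d\<close> central and \<open>d \<noteq> e\<close> are
  solvable, so such a matrix is \<open>S D S\<^sup>-\<^sup>1\<close> with \<open>S\<close> unitriangular, while \<open>I = S S\<^sup>-\<^sup>1\<close>: this
  gives three (resp. two) more terms. Everything works over a division ring of characteristic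
  zero, whose integers supply the central scalars; the real quaternions are one.
\<close>

text \<open>Only the entries with both indices below 3 of a matrix matter; \<open>agree3\<close> is equality there.\<close>

type_synonym 'a mat = "nat \<Rightarrow> nat \<Rightarrow> 'a"

definition mult3 :: "'a::semiring_0 mat \<Rightarrow> 'a mat \<Rightarrow> 'a mat" where
  "mult3 A B = (\<lambda>i k. \<Sum>j<3. A i j * B j k)"

definition id3 :: "'a::zero_neq_one mat" where
  "id3 = (\<lambda>i k. if i = k then 1 else 0)"

definition diag3 :: "(nat \<Rightarrow> 'a::zero) \<Rightarrow> 'a mat" where
  "diag3 d = (\<lambda>i k. if i = k then d i else 0)"

definition agree3 :: "'a mat \<Rightarrow> 'a mat \<Rightarrow> bool" where
  "agree3 A B \<longleftrightarrow> (\<forall>i<3. \<forall>k<3. A i k = B i k)"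

lemma less_3_iff: "(i::nat) < 3 \<longleftrightarrow> i = 0 \<or> i = 1 \<or> i = 2"
  by auto

lemma all_less_3: "(\<forall>i<3::nat. P i) \<longleftrightarrow> P 0 \<and> P 1 \<and> P 2"
  by (auto simp: less_3_iff)

lemma sum_lessThan_3: "(\<Sum>j<3::nat. f j) = f 0 + f 1 + f 2"
  by (simp add: numeral_3_eq_3 eval_nat_numeral)

lemma mult3_assoc: "mult3 (mult3 A B) C = mult3 A (mult3 B C)"
  by (simp add: mult3_def fun_eq_iff sum_lessThan_3 algebra_simps)

lemma agree3_trans: "agree3 A B \<Longrightarrow> agree3 B C \<Longrightarrow> agree3 A C"
  by (simp add: agree3_def)

lemma agree3_mult3: "agree3 A A' \<Longrightarrow> agree3 B B' \<Longrightarrow> agree3 (mult3 A B) (mult3 A' B')"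
  by (simp add: agree3_def mult3_def)

lemma mult3_id3_left: "agree3 (mult3 id3 A) (A :: 'a::semiring_1 mat)"
  by (simp add: agree3_def mult3_def id3_def sum_lessThan_3 all_less_3)

lemma mult3_id3_right: "agree3 (mult3 A id3) (A :: 'a::semiring_1 mat)"
  by (simp add: agree3_def mult3_def id3_def sum_lessThan_3 all_less_3)

definition pencil_rank_le :: "nat \<Rightarrow> 'a::semiring_0 mat \<Rightarrow> 'a mat \<Rightarrow> bool" where
  "pencil_rank_le r A B \<longleftrightarrow> (\<exists>(a::nat \<Rightarrow> nat \<Rightarrow> 'a) (c::nat \<Rightarrow> nat \<Rightarrow> 'a) \<beta> \<gamma>.
     \<forall>i<3. \<forall>k<3. A i k = (\<Sum>l<r. a l i * \<beta> l * c l k) \<and> B i k = (\<Sum>l<r. a l i * \<gamma> l * c l k))"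

lemma pencil_rank_leI:
  assumes "\<forall>i<3. \<forall>k<3. A i k = (\<Sum>l<r. a l i * \<beta> l * c l k) \<and> B i k = (\<Sum>l<r. a l i * \<gamma> l * c l k)"
  shows "pencil_rank_le r A B"
  using assms unfolding pencil_rank_le_def by blast

lemma pencil_rank_leE:
  assumes "pencil_rank_le r A B"
  obtains a c \<beta> \<gamma> where
    "\<forall>i<3. \<forall>k<3. A i k = (\<Sum>l<r. a l i * \<beta> l * c l k) \<and> B i k = (\<Sum>l<r. a l i * \<gamma> l * c l k)"
  using assms unfolding pencil_rank_le_def by blast

lemma mult3_sandwich_sum:
  fixes P Q :: "'a::semiring_0 mat"
  shows "mult3 (mult3 P (\<lambda>j m. \<Sum>l<r. a l j * b l * c l m)) Q i k
    = (\<Sum>l<r. (\<Sum>j<3. P i j * a l j) * b l * (\<Sum>m<3. c l m * Q m k))"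
proof -
  have "mult3 (mult3 P (\<lambda>j m. \<Sum>l<r. a l j * b l * c l m)) Q i k
      = (\<Sum>m<3. \<Sum>j<3. \<Sum>l<r. P i j * a l j * b l * c l m * Q m k)"
    by (simp add: mult3_def sum_distrib_left sum_distrib_right mult.assoc)
  also have "\<dots> = (\<Sum>j<3. \<Sum>l<r. \<Sum>m<3. P i j * a l j * b l * c l m * Q m k)"
    by (subst sum.swap) (rule sum.cong[OF refl], rule sum.swap)
  also have "\<dots> = (\<Sum>l<r. \<Sum>j<3. \<Sum>m<3. P i j * a l j * b l * c l m * Q m k)"
    by (rule sum.swap)
  also have "\<dots> = (\<Sum>l<r. (\<Sum>j<3. P i j * a l j) * b l * (\<Sum>m<3. c l m * Q m k))"
    by (simp add: sum_distrib_left sum_distrib_right mult.assoc) (rule sum.cong[OF refl], rule sum.swap)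
  finally show ?thesis .
qed

lemma pencil_rank_le_equivalent:
  assumes "pencil_rank_le r A' B'"
    and "agree3 A (mult3 (mult3 P A') Q)" "agree3 B (mult3 (mult3 P B') Q)"
  shows "pencil_rank_le r A B"
proof -
  obtain a c \<beta> \<gamma> where h: "\<forall>i<3. \<forall>k<3.
      A' i k = (\<Sum>l<r. a l i * \<beta> l * c l k) \<and> B' i k = (\<Sum>l<r. a l i * \<gamma> l * c l k)"
    using assms(1) by (rule pencil_rank_leE)
  have "agree3 A (mult3 (mult3 P (\<lambda>j m. \<Sum>l<r. a l j * \<beta> l * c l m)) Q)"
       "agree3 B (mult3 (mult3 P (\<lambda>j m. \<Sum>l<r. a l j * \<gamma> l * c l m)) Q)"
    using assms(2,3) h by (auto simp: agree3_def mult3_def)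
  then show ?thesis
    unfolding agree3_def mult3_sandwich_sum
    by (intro pencil_rank_leI[where a="\<lambda>l i. \<Sum>j<3. P i j * a l j"
          and c="\<lambda>l k. \<Sum>m<3. c l m * Q m k" and \<beta>=\<beta> and \<gamma>=\<gamma>]) blast
qed

lemma pencil_rank_le_cong:
  assumes "pencil_rank_le r A B" "agree3 A A'" "agree3 B B'"
  shows "pencil_rank_le r A' B'"
proof -
  obtain a c \<beta> \<gamma> where "\<forall>i<3. \<forall>k<3.
      A i k = (\<Sum>l<r. a l i * \<beta> l * c l k) \<and> B i k = (\<Sum>l<r. a l i * \<gamma> l * c l k)"
    using assms(1) by (rule pencil_rank_leE)
  then show ?thesis
    using assms(2,3) by (intro pencil_rank_leI[where a=a and c=c and \<beta>=\<beta> and \<gamma>=\<gamma>])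
      (simp add: agree3_def)
qed

lemma pencil_rank_le_reindex:
  assumes "pencil_rank_le r A' B'" "\<forall>i<3. f i < 3" "\<forall>k<3. g k < 3"
    and "\<forall>i<3. \<forall>k<3. A i k = A' (f i) (g k) \<and> B i k = B' (f i) (g k)"
  shows "pencil_rank_le r A B"
proof -
  obtain a c \<beta> \<gamma> where "\<forall>i<3. \<forall>k<3.
      A' i k = (\<Sum>l<r. a l i * \<beta> l * c l k) \<and> B' i k = (\<Sum>l<r. a l i * \<gamma> l * c l k)"
    using assms(1) by (rule pencil_rank_leE)
  then show ?thesis
    using assms(2-4) by (intro pencil_rank_leI[where a="\<lambda>l i. a l (f i)" and c="\<lambda>l k. c l (g k)"
        and \<beta>=\<beta> and \<gamma>=\<gamma>]) simp
qed

lemma pencil_rank_le_permute: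
  assumes "pencil_rank_le r (\<lambda>i k. A (f i) (g k)) (\<lambda>i k. B (f i) (g k))"
    and "\<forall>i<3. f i < 3 \<and> f (f i) = i" "\<forall>k<3. g k < 3 \<and> g (g k) = k"
  shows "pencil_rank_le r A B"
  by (rule pencil_rank_le_reindex[OF assms(1), where f=f and g=g]) (use assms(2,3) in auto)

lemma sum_lessThan_add:
  "(\<Sum>l<r + s::nat. f l :: 'a::comm_monoid_add) = (\<Sum>l<r. f l) + (\<Sum>l<s. f (r + l))"
  by (induction s) (simp_all add: add.assoc)

lemma pencil_rank_le_add:
  assumes "pencil_rank_le r A B" "pencil_rank_le s A' B'"
  shows "pencil_rank_le (r + s) (\<lambda>i k. A i k + A' i k) (\<lambda>i k. B i k + B' i k)"
proof -
  obtain a c \<beta> \<gamma> where h: "\<forall>i<3. \<forall>k<3.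
      A i k = (\<Sum>l<r. a l i * \<beta> l * c l k) \<and> B i k = (\<Sum>l<r. a l i * \<gamma> l * c l k)"
    using assms(1) by (rule pencil_rank_leE)
  obtain a' c' \<beta>' \<gamma>' where h': "\<forall>i<3. \<forall>k<3.
      A' i k = (\<Sum>l<s. a' l i * \<beta>' l * c' l k) \<and> B' i k = (\<Sum>l<s. a' l i * \<gamma>' l * c' l k)"
    using assms(2) by (rule pencil_rank_leE)
  let ?join = "\<lambda>u v l. if l < r then u l else v (l - r)"
  show ?thesis
    using h h'
    by (intro pencil_rank_leI[where a="?join a a'" and c="?join c c'" and \<beta>="?join \<beta> \<beta>'"
          and \<gamma>="?join \<gamma> \<gamma>'"]) (simp add: sum_lessThan_add)
qed

lemma pencil_rank_le_zero: "pencil_rank_le r (\<lambda>_ _. 0) (\<lambda>_ _. 0)"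
  by (intro pencil_rank_leI[where a="\<lambda>_ _. 0" and c="\<lambda>_ _. 0" and \<beta>="\<lambda>_. 0" and \<gamma>="\<lambda>_. 0"]) simp

lemma pencil_rank_le_mono:
  assumes "pencil_rank_le r A B" "r \<le> n"
  shows "pencil_rank_le n A B"
proof -
  have "pencil_rank_le (r + (n - r)) (\<lambda>i k. A i k + 0) (\<lambda>i k. B i k + 0)"
    using assms(1) pencil_rank_le_zero by (rule pencil_rank_le_add)
  then show ?thesis using assms(2) by simp
qed

lemma pencil_rank_le_add_rank_one:
  assumes "pencil_rank_le r A B" "r < n"
    and "agree3 A' (\<lambda>i k. A i k + x i * \<alpha> * y k)" "agree3 B' (\<lambda>i k. B i k + x i * \<beta> * y k)"
  shows "pencil_rank_le n A' B'"
proof -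
  have "pencil_rank_le 1 (\<lambda>i k. x i * \<alpha> * y k) (\<lambda>i k. x i * \<beta> * y k)"
    by (intro pencil_rank_leI[where a="\<lambda>_. x" and c="\<lambda>_. y" and \<beta>="\<lambda>_. \<alpha>" and \<gamma>="\<lambda>_. \<beta>"]) simp
  with assms(1) have "pencil_rank_le (r + 1) (\<lambda>i k. A i k + x i * \<alpha> * y k) (\<lambda>i k. B i k + x i * \<beta> * y k)"
    by (rule pencil_rank_le_add)
  then have "pencil_rank_le (r + 1) A' B'"
    by (rule pencil_rank_le_cong) (use assms(3,4) in \<open>simp_all add: agree3_def\<close>)
  then show ?thesis
    by (rule pencil_rank_le_mono) (use assms(2) in simp)
qed

lemma pencil_rank_le_zero_left: "pencil_rank_le 3 (\<lambda>_ _. 0) (M :: 'a::semiring_1 mat)"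
  by (intro pencil_rank_leI[where a="\<lambda>l i. M i l" and c="\<lambda>l k. if l = k then 1 else 0"
        and \<beta>="\<lambda>_. 0" and \<gamma>="\<lambda>_. 1"]) (simp add: sum_lessThan_3 all_less_3)

lemma pencil_rank_le_diag3:
  "pencil_rank_le 3 (mult3 (mult3 S (diag3 d)) S') (mult3 (mult3 S (diag3 e)) S')"
  by (intro pencil_rank_leI[where a="\<lambda>l i. S i l" and c="\<lambda>l k. S' l k" and \<beta>=d and \<gamma>=e])
    (simp add: sum_lessThan_3 mult3_def diag3_def)

lemma similar_diag3_if_eigenbasis:
  fixes S S' U D :: "'a::ring_1 mat"
  assumes "agree3 (mult3 S S') id3" "agree3 (mult3 U S) (mult3 S D)"
  shows "agree3 (mult3 (mult3 S D) S') U"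
proof -
  have "agree3 (mult3 (mult3 S D) S') (mult3 (mult3 U S) S')"
    by (rule agree3_mult3) (use assms(2) in \<open>simp_all add: agree3_def\<close>)
  also have "mult3 (mult3 U S) S' = mult3 U (mult3 S S')"
    by (rule mult3_assoc)
  finally have "agree3 (mult3 (mult3 S D) S') (mult3 U (mult3 S S'))" .
  moreover have "agree3 (mult3 U (mult3 S S')) (mult3 U id3)"
    by (rule agree3_mult3) (use assms(1) in \<open>simp_all add: agree3_def\<close>)
  ultimately show ?thesis
    using mult3_id3_right[of U] by (blast intro: agree3_trans)
qed

lemma pencil_rank_le_of_equivalent:
  fixes P P' Q Q' :: "'a::ring_1 mat"
  assumes "agree3 (mult3 P P') id3" "agree3 (mult3 Q' Q) id3" "agree3 A (mult3 (mult3 P A0) Q)"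
    and "\<And>B. pencil_rank_le r A0 B"
  shows "pencil_rank_le r A B"
proof -
  have "agree3 (mult3 (mult3 (mult3 P P') B) (mult3 Q' Q)) (mult3 (mult3 id3 B) id3)"
    by (intro agree3_mult3 assms(1,2)) (simp add: agree3_def)
  moreover have "agree3 (mult3 (mult3 id3 B) id3) B"
    by (simp add: agree3_def mult3_def id3_def sum_lessThan_3 all_less_3)
  ultimately have "agree3 B (mult3 (mult3 P (mult3 (mult3 P' B) Q')) Q)"
    by (simp add: agree3_def mult3_assoc)
  then show ?thesis
    using pencil_rank_le_equivalent[OF assms(4) assms(3)] by blast
qed

lemma pencil_rank_le_id3_similar_diag3:
  fixes S S' U :: "'a::ring_1 mat"
  assumes "agree3 (mult3 S S') id3" "agree3 (mult3 U S) (mult3 S (diag3 d))"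
  shows "pencil_rank_le 3 id3 U"
proof -
  have "agree3 (mult3 S (diag3 (\<lambda>_. 1))) S"
    by (simp add: agree3_def mult3_def diag3_def sum_lessThan_3 all_less_3)
  then have "agree3 (mult3 (mult3 S (diag3 (\<lambda>_. 1))) S') (mult3 S S')"
    by (rule agree3_mult3) (simp add: agree3_def)
  then have "agree3 (mult3 (mult3 S (diag3 (\<lambda>_. 1))) S') id3"
    using assms(1) by (rule agree3_trans)
  with pencil_rank_le_diag3 show ?thesis
    using similar_diag3_if_eigenbasis[OF assms] by (rule pencil_rank_le_cong)
qed

definition central :: "'a::times \<Rightarrow> bool" where
  "central d \<longleftrightarrow> (\<forall>q. d * q = q * d)"

lemma central_of_nat: "central (of_nat n :: 'a::semiring_1)"
  by (simp add: central_def mult_of_nat_commute)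

lemma central_avoiding:
  fixes x :: "'a::ring_char_0"
  obtains d e where "central d" "central e" "d \<noteq> x" "e \<noteq> x" "d \<noteq> e"
proof -
  obtain n where "of_nat n \<noteq> x" "of_nat (Suc n) \<noteq> x"
  proof (cases "x \<in> range of_nat")
    case True
    then obtain m where "x = of_nat m" by blast
    then show ?thesis by (intro that[of "Suc m"]) (simp_all del: of_nat_Suc)
  next
    case False
    then show ?thesis by (intro that[of 0]) blast+
  qed
  then show ?thesis
    using central_of_nat by (rule_tac that[of "of_nat n" "of_nat (Suc n)"]) (simp_all del: of_nat_Suc)
qed

lemma mult_inverse_cancel_left: "(a::'a::division_ring) \<noteq> 0 \<Longrightarrow> a * (inverse a * b) = b"
  by (simp add: mult.assoc[symmetric])

lemma inverse_mult_cancel_left: "(a::'a::division_ring) \<noteq> 0 \<Longrightarrow> inverse a * (a * b) = b"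
  by (simp add: mult.assoc[symmetric])

lemma sylvester_central_left:
  fixes d e u :: "'a::division_ring"
  assumes "central d" "e \<noteq> d"
  shows "d * (u * inverse (e - d)) + u = u * inverse (e - d) * e"
proof -
  have "u * inverse (e - d) * (e - d) = u"
    using assms(2) by (simp add: mult.assoc)
  moreover have "d * (u * inverse (e - d)) = u * inverse (e - d) * d"
    using assms(1) by (simp add: central_def)
  ultimately show ?thesis by (simp add: algebra_simps)
qed

lemma sylvester_central_right:
  fixes d e u :: "'a::division_ring"
  assumes "central d" "d \<noteq> e"
  shows "e * (inverse (d - e) * u) + u = inverse (d - e) * u * d"
proof -
  have "(d - e) * (inverse (d - e) * u) = u"
    using assms(2) by (simp add: mult_inverse_cancel_left)
  moreover have "d * (inverse (d - e) * u) = inverse (d - e) * u * d"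
    using assms(1) by (simp add: central_def)
  ultimately show ?thesis by (simp add: algebra_simps)
qed

lemma pencil_rank_le_id3_upper_triangular:
  fixes U :: "'a::division_ring mat"
  assumes lower: "U 1 0 = 0" "U 2 0 = 0" "U 2 1 = 0"
    and central: "central (U 0 0)" "central (U 2 2)"
    and distinct: "U 1 1 \<noteq> U 0 0" "U 2 2 \<noteq> U 1 1" "U 2 2 \<noteq> U 0 0"
  shows "pencil_rank_le 3 id3 U"
proof -
  define x where "x = U 0 1 * inverse (U 1 1 - U 0 0)"
  define z where "z = inverse (U 2 2 - U 1 1) * U 1 2"
  define t where "t = (U 0 1 * z + U 0 2) * inverse (U 2 2 - U 0 0)"
  have x: "U 0 0 * x + U 0 1 = x * U 1 1"
    unfolding x_def using central(1) distinct(1) by (rule sylvester_central_left)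
  have z: "U 1 1 * z + U 1 2 = z * U 2 2"
    unfolding z_def using central(2) distinct(2) by (rule sylvester_central_right)
  have t: "U 0 0 * t + (U 0 1 * z + U 0 2) = t * U 2 2"
    unfolding t_def using central(1) distinct(3) by (rule sylvester_central_left)
  define S :: "'a mat" where "S = (\<lambda>i k. if i = k then 1 else if i = 0 \<and> k = 1 then x
    else if i = 0 \<and> k = 2 then t else if i = 1 \<and> k = 2 then z else 0)"
  define S' :: "'a mat" where "S' = (\<lambda>i k. if i = k then 1 else if i = 0 \<and> k = 1 then - x
    else if i = 0 \<and> k = 2 then x * z - t else if i = 1 \<and> k = 2 then - z else 0)"
  have "agree3 (mult3 S S') id3"
    by (simp add: agree3_def mult3_def sum_lessThan_3 all_less_3 S_def S'_def id3_def algebra_simps)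
  moreover have "agree3 (mult3 U S) (mult3 S (diag3 (\<lambda>l. U l l)))"
    using x z t lower
    by (simp add: agree3_def mult3_def sum_lessThan_3 all_less_3 S_def diag3_def algebra_simps)
  ultimately show ?thesis
    by (rule pencil_rank_le_id3_similar_diag3)
qed

lemma pencil_rank_le_id3_nonzero20:
  fixes C :: "'a::{division_ring,ring_char_0} mat"
  assumes "C 2 0 \<noteq> 0"
  shows "pencil_rank_le 4 id3 C"
proof -
  define y1 where "y1 = inverse (C 2 0) * C 2 1"
  obtain d e where de: "central d" "central e" "d \<noteq> e"
    "d \<noteq> C 1 1 - C 1 0 * y1" "e \<noteq> C 1 1 - C 1 0 * y1"
    by (rule central_avoiding)
  define y2 where "y2 = inverse (C 2 0) * (C 2 2 - e)"
  define w where "w = (\<lambda>i. if i = 0 then C 0 0 - d else C i 0)"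
  define y where "y = (\<lambda>k::nat. if k = 0 then 1 else if k = 1 then y1 else y2)"
  define U where "U = (\<lambda>i k. C i k - w i * y k)"
  \<comment> \<open>\<open>w\<close> clears column 0 below the diagonal, \<open>y\<close> (scaled by \<open>C 2 0\<close>) clears row 2.\<close>
  have diagonal: "U 0 0 = d" "U 1 1 = C 1 1 - C 1 0 * y1" "U 2 2 = e"
    using assms by (simp_all add: U_def w_def y_def y2_def mult_inverse_cancel_left)
  have lower: "U 1 0 = 0" "U 2 0 = 0" "U 2 1 = 0"
    using assms by (simp_all add: U_def w_def y_def y1_def mult_inverse_cancel_left)
  have "pencil_rank_le 3 id3 U"
    by (rule pencil_rank_le_id3_upper_triangular) (use lower de diagonal in auto)
  then show ?thesis
    by (rule pencil_rank_le_add_rank_one[where x=w and y=y and \<alpha>=0 and \<beta>=1])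
      (simp_all add: agree3_def U_def)
qed

lemma pencil_rank_le_id3:
  fixes C :: "'a::{division_ring,ring_char_0} mat"
  shows "pencil_rank_le 4 id3 C"
proof (cases "\<exists>p<3. \<exists>q<3. p \<noteq> q \<and> C p q \<noteq> 0")
  case False
  then have off_diagonal: "C p q = 0" if "p < 3" "q < 3" "p \<noteq> q" for p q
    using that by blast
  have "pencil_rank_le 3 (mult3 (mult3 id3 (diag3 (\<lambda>_. 1))) id3)
      (mult3 (mult3 id3 (diag3 (\<lambda>l. C l l))) id3)"
    by (rule pencil_rank_le_diag3)
  then have "pencil_rank_le 3 id3 C"
    by (rule pencil_rank_le_cong)
      (simp_all add: agree3_def mult3_def id3_def diag3_def sum_lessThan_3 all_less_3 off_diagonal)
  then show ?thesis
    by (rule pencil_rank_le_mono) simp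
next
  case True
  then obtain p q where pq: "p < 3" "q < 3" "p \<noteq> q" "C p q \<noteq> 0" by blast
  \<comment> \<open>Conjugating by the permutation \<open>\<pi>\<close> fixes \<open>id3\<close> and moves \<open>C p q\<close> to position \<open>(2, 0)\<close>.\<close>
  define \<pi> where "\<pi> = (\<lambda>i::nat. if i = 2 then p else if i = 0 then q else 3 - p - q)"
  define \<rho> where "\<rho> = (\<lambda>j::nat. if j = p then 2::nat else if j = q then 0 else 1)"
  have \<rho>: "\<forall>j<3. \<pi> (\<rho> j) = j \<and> \<rho> j < 3" "\<forall>i<3. \<forall>k<3. \<rho> i = \<rho> k \<longleftrightarrow> i = k"
    using pq unfolding \<pi>_def \<rho>_def by (auto simp: less_3_iff)
  have "pencil_rank_le 4 id3 (\<lambda>i k. C (\<pi> i) (\<pi> k))"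
    by (rule pencil_rank_le_id3_nonzero20) (use pq in \<open>simp add: \<pi>_def\<close>)
  then show ?thesis
    by (rule pencil_rank_le_reindex[where f=\<rho> and g=\<rho>]) (use \<rho> in \<open>auto simp: id3_def\<close>)
qed

definition block2 :: "'a::zero mat \<Rightarrow> 'a mat" where
  "block2 C = (\<lambda>i k. if i < 2 \<and> k < 2 then C i k else 0)"

definition id2 :: "'a::zero_neq_one mat" where
  "id2 = block2 id3"

lemma pencil_rank_le_id2_upper_triangular:
  fixes C :: "'a::division_ring mat"
  assumes "C 1 0 = 0" "central (C 0 0)" "C 1 1 \<noteq> C 0 0"
  shows "pencil_rank_le 2 id2 (block2 C)"
proof -
  define x where "x = C 0 1 * inverse (C 1 1 - C 0 0)"
  have x: "C 0 0 * x + C 0 1 = x * C 1 1"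
    unfolding x_def using assms(2,3) by (rule sylvester_central_left)
  define S :: "'a mat" where "S = (\<lambda>i k. if i = k then 1 else if i = 0 \<and> k = 1 then x else 0)"
  define S' :: "'a mat" where "S' = (\<lambda>i k. if i = k then 1 else if i = 0 \<and> k = 1 then - x else 0)"
  define d where "d = (\<lambda>l. if l = 2 then 0 else C l l)"
  define e :: "nat \<Rightarrow> 'a" where "e = (\<lambda>l. if l = 2 then 0 else 1)"
  have "agree3 (mult3 S S') id3"
    by (simp add: agree3_def mult3_def sum_lessThan_3 all_less_3 S_def S'_def id3_def)
  moreover have "agree3 (mult3 (block2 C) S) (mult3 S (diag3 d))"
    using x assms(1)
    by (simp add: agree3_def mult3_def sum_lessThan_3 all_less_3 S_def diag3_def block2_def d_def)
  ultimately have "agree3 (mult3 (mult3 S (diag3 d)) S') (block2 C)"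
    by (rule similar_diag3_if_eigenbasis)
  moreover have "agree3 (mult3 (mult3 S (diag3 e)) S') id2"
    by (simp add: agree3_def mult3_def sum_lessThan_3 all_less_3 S_def S'_def diag3_def e_def
        id2_def block2_def id3_def)
  moreover have "pencil_rank_le 2 (mult3 (mult3 S (diag3 e)) S') (mult3 (mult3 S (diag3 d)) S')"
    by (intro pencil_rank_leI[where a="\<lambda>l i. S i l" and c="\<lambda>l k. S' l k" and \<beta>=e and \<gamma>=d])
      (simp add: mult3_def diag3_def sum_lessThan_3 e_def d_def numeral_2_eq_2)
  ultimately show ?thesis
    using pencil_rank_le_cong by blast
qed

lemma pencil_rank_le_id2_block2:
  fixes C :: "'a::{division_ring,ring_char_0} mat"
  shows "pencil_rank_le 3 id2 (block2 C)"
proof -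
  obtain d where d: "central d" "d \<noteq> C 1 1"
    using central_avoiding by metis
  define C' where "C' = (\<lambda>i k. if i = 0 \<and> k = 0 then d else if i = 1 \<and> k = 0 then 0 else C i k)"
  define w where "w = (\<lambda>i::nat. if i = 0 then C 0 0 - d else if i = 1 then C 1 0 else 0)"
  define e0 :: "nat \<Rightarrow> 'a" where "e0 = (\<lambda>k. if k = 0 then 1 else 0)"
  have "pencil_rank_le 2 id2 (block2 C')"
    using d by (intro pencil_rank_le_id2_upper_triangular) (auto simp: C'_def)
  then show ?thesis
    by (rule pencil_rank_le_add_rank_one[where x=w and y=e0 and \<alpha>=0 and \<beta>=1])
      (simp_all add: agree3_def block2_def C'_def w_def e0_def all_less_3)
qed

lemma pencil_rank_le_id2_corner_nonzero:
  fixes B :: "'a::{division_ring,ring_char_0} mat"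
  assumes "B 2 2 \<noteq> 0"
  shows "pencil_rank_le 4 id2 B"
proof -
  \<comment> \<open>Eliminating row and column 2 against the pivot \<open>B 2 2\<close> fixes \<open>id2\<close>.\<close>
  define P :: "'a mat" where
    "P = (\<lambda>i k. if i = k then 1 else if k = 2 \<and> i < 2 then B i 2 * inverse (B 2 2) else 0)"
  define Q :: "'a mat" where
    "Q = (\<lambda>i k. if i = k then 1 else if i = 2 \<and> k < 2 then inverse (B 2 2) * B 2 k else 0)"
  define C where "C = (\<lambda>i k. B i k - B i 2 * inverse (B 2 2) * B 2 k)"
  define e2 :: "nat \<Rightarrow> 'a" where "e2 = (\<lambda>k. if k = 2 then 1 else 0)"
  define B' where "B' = (\<lambda>i k. block2 C i k + e2 i * B 2 2 * e2 k)"
  have "pencil_rank_le 4 id2 B'"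
    by (rule pencil_rank_le_add_rank_one[OF pencil_rank_le_id2_block2[of C], where x=e2 and y=e2
          and \<alpha>=0 and \<beta>="B 2 2"]) (simp_all add: agree3_def B'_def)
  moreover have "agree3 id2 (mult3 (mult3 P id2) Q)"
    by (simp add: agree3_def mult3_def sum_lessThan_3 all_less_3 P_def Q_def id2_def block2_def id3_def)
  moreover have "agree3 B (mult3 (mult3 P B') Q)"
    using assms
    by (simp add: agree3_def mult3_def sum_lessThan_3 all_less_3 P_def Q_def B'_def C_def e2_def
        block2_def algebra_simps mult_inverse_cancel_left inverse_mult_cancel_left)
  ultimately show ?thesis
    by (rule pencil_rank_le_equivalent)
qed

lemma pencil_rank_le_id2_last_row_zero:
  fixes B :: "'a::{division_ring,ring_char_0} mat"
  assumes "B 2 0 = 0" "B 2 1 = 0" "B 2 2 = 0"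
  shows "pencil_rank_le 4 id2 B"
proof -
  define v where "v = (\<lambda>i. if i < 2 then B i 2 else 0)"
  define e2 :: "nat \<Rightarrow> 'a" where "e2 = (\<lambda>k. if k = 2 then 1 else 0)"
  show ?thesis
    by (rule pencil_rank_le_add_rank_one[OF pencil_rank_le_id2_block2[of B], where x=v and y=e2
          and \<alpha>=0 and \<beta>=1]) (use assms in \<open>simp_all add: agree3_def all_less_3 block2_def v_def e2_def\<close>)
qed

lemma pencil_rank_le_id2_corner_zero:
  fixes B :: "'a::{division_ring,ring_char_0} mat"
  assumes "B 2 2 = 0" "B 2 0 \<noteq> 0"
  shows "pencil_rank_le 4 id2 B"
proof -
  define p1 where "p1 = B 1 0 * inverse (B 2 0)"
  obtain d where d: "central d" "d \<noteq> B 1 1 - p1 * B 2 1"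
    using central_avoiding by metis
  define p0 where "p0 = (B 0 0 - d) * inverse (B 2 0)"
  \<comment> \<open>Adding multiples of row 2 to the other rows fixes \<open>id2\<close>, whose last row vanishes.\<close>
  define P :: "'a mat" where "P = (\<lambda>i k. if i = k then 1 else if i = 0 \<and> k = 2 then p0
    else if i = 1 \<and> k = 2 then p1 else 0)"
  define B' where "B' = (\<lambda>i k. if i < 2 then B i k - P i 2 * B 2 k else B i k)"
  define v where "v = (\<lambda>i. if i < 2 then B i 2 else 0)"
  define e2 :: "nat \<Rightarrow> 'a" where "e2 = (\<lambda>k. if k = 2 then 1 else 0)"
  define u where "u = (\<lambda>k. if k < 2 then B 2 k else 0)"
  have "B' 0 0 = d" "B' 1 0 = 0" "B' 1 1 = B 1 1 - p1 * B 2 1"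
    using assms(2) by (simp_all add: B'_def P_def p0_def p1_def mult.assoc)
  then have "pencil_rank_le 2 id2 (block2 B')"
    using d by (intro pencil_rank_le_id2_upper_triangular) auto
  then have "pencil_rank_le 3 id2 (\<lambda>i k. block2 B' i k + v i * 1 * e2 k)"
    by (rule pencil_rank_le_add_rank_one[where x=v and y=e2 and \<alpha>=0 and \<beta>=1])
      (simp_all add: agree3_def)
  then have "pencil_rank_le 4 id2 B'"
    by (rule pencil_rank_le_add_rank_one[where x=e2 and y=u and \<alpha>=0 and \<beta>=1])
      (use assms(1) in \<open>simp_all add: agree3_def all_less_3 block2_def B'_def P_def v_def e2_def u_def\<close>)
  moreover have "agree3 id2 (mult3 (mult3 P id2) id3)"
    by (simp add: agree3_def mult3_def sum_lessThan_3 all_less_3 P_def id2_def block2_def id3_def)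
  moreover have "agree3 B (mult3 (mult3 P B') id3)"
    by (simp add: agree3_def mult3_def sum_lessThan_3 all_less_3 P_def B'_def id3_def)
  ultimately show ?thesis
    by (rule pencil_rank_le_equivalent)
qed

lemma pencil_rank_le_id2:
  fixes B :: "'a::{division_ring,ring_char_0} mat"
  shows "pencil_rank_le 4 id2 B"
proof (cases "B 2 2 = 0")
  case False
  then show ?thesis by (rule pencil_rank_le_id2_corner_nonzero)
next
  case corner: True
  consider "B 2 0 \<noteq> 0" | "B 2 1 \<noteq> 0" | "B 2 0 = 0" "B 2 1 = 0" by blast
  then show ?thesis
  proof cases
    case 1
    with corner show ?thesis by (rule pencil_rank_le_id2_corner_zero)
  next
    case 2
    define sw where "sw = (\<lambda>i::nat. if i = 0 then 1 else if i = 1 then 0 else i)"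
    have "pencil_rank_le 4 id2 (\<lambda>i k. B (sw i) (sw k))"
      by (rule pencil_rank_le_id2_corner_zero) (use corner 2 in \<open>simp_all add: sw_def\<close>)
    then have "pencil_rank_le 4 (\<lambda>i k. id2 (sw i) (sw k)) (\<lambda>i k. B (sw i) (sw k))"
      by (rule pencil_rank_le_cong) (auto simp: agree3_def id2_def block2_def id3_def sw_def all_less_3)
    then show ?thesis
      by (rule pencil_rank_le_permute) (auto simp: sw_def all_less_3)
  next
    case 3
    with corner show ?thesis by (intro pencil_rank_le_id2_last_row_zero)
  qed
qed

lemma pencil_rank_le_unit00:
  fixes B :: "'a::semiring_1 mat"
  shows "pencil_rank_le 4 (\<lambda>i k. if i = 0 \<and> k = 0 then 1 else 0) B"
proof -
  define e0 :: "nat \<Rightarrow> 'a" where "e0 = (\<lambda>k. if k = 0 then 1 else 0)"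
  show ?thesis
    by (rule pencil_rank_le_add_rank_one[OF pencil_rank_le_zero_left[of B], where x=e0 and y=e0
          and \<alpha>=1 and \<beta>=0]) (simp_all add: agree3_def e0_def)
qed

definition schur_reduce :: "'a::division_ring mat \<Rightarrow> 'a mat" where
  "schur_reduce A = (\<lambda>i k. if i = 0 \<and> k = 0 then 1 else if i = 0 \<or> k = 0 then 0
     else A i k - A i 0 * inverse (A 0 0) * A 0 k)"

lemma pencil_rank_le_pivot:
  fixes A :: "'a::division_ring mat"
  assumes "A 0 0 \<noteq> 0" "\<And>B. pencil_rank_le r (schur_reduce A) B"
  shows "pencil_rank_le r A B"
proof (rule pencil_rank_le_of_equivalent[OF _ _ _ assms(2)])
  define L :: "'a mat" where "L = (\<lambda>i k. if k = 0 then (if i = 0 then 1 else A i 0 * inverse (A 0 0))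
    else if i = k then 1 else 0)"
  define L' :: "'a mat" where "L' = (\<lambda>i k. if k = 0 then (if i = 0 then 1 else - (A i 0 * inverse (A 0 0)))
    else if i = k then 1 else 0)"
  define U :: "'a mat" where "U = (\<lambda>i k. if i = 0 then A 0 k else if i = k then 1 else 0)"
  define U' :: "'a mat" where "U' = (\<lambda>i k. if i = 0 then (if k = 0 then inverse (A 0 0)
    else - (inverse (A 0 0) * A 0 k)) else if i = k then 1 else 0)"
  show "agree3 (mult3 L L') id3"
    by (simp add: agree3_def mult3_def sum_lessThan_3 all_less_3 L_def L'_def id3_def)
  show "agree3 (mult3 U' U) id3"
    using assms(1) by (simp add: agree3_def mult3_def sum_lessThan_3 all_less_3 U_def U'_def id3_def)
  show "agree3 A (mult3 (mult3 L (schur_reduce A)) U)"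
    using assms(1)
    by (simp add: agree3_def mult3_def sum_lessThan_3 all_less_3 L_def U_def schur_reduce_def
        algebra_simps mult_inverse_cancel_left inverse_mult_cancel_left)
qed

lemma pencil_rank_le_diag_one_one:
  fixes B :: "'a::{division_ring,ring_char_0} mat"
  shows "pencil_rank_le 4 (diag3 (\<lambda>l. if l = 2 then s else 1)) B"
proof (cases "s = 0")
  case True
  show ?thesis
    by (rule pencil_rank_le_cong[OF pencil_rank_le_id2])
      (use True in \<open>auto simp: agree3_def id2_def block2_def id3_def diag3_def all_less_3\<close>)
next
  case False
  show ?thesis
  proof (rule pencil_rank_le_of_equivalent[OF _ _ _ pencil_rank_le_id3])
    show "agree3 (mult3 id3 id3) (id3 :: 'a mat)"
      by (rule mult3_id3_left)
    show "agree3 (mult3 (diag3 (\<lambda>l. if l = 2 then inverse s else 1))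
        (diag3 (\<lambda>l. if l = 2 then s else 1))) id3"
      using False by (simp add: agree3_def mult3_def sum_lessThan_3 all_less_3 id3_def diag3_def)
    show "agree3 (diag3 (\<lambda>l. if l = 2 then s else 1))
        (mult3 (mult3 id3 id3) (diag3 (\<lambda>l. if l = 2 then s else 1)))"
      by (simp add: agree3_def mult3_def sum_lessThan_3 all_less_3 id3_def diag3_def)
  qed
qed

lemma pencil_rank_le_reduced_pivot11:
  fixes A :: "'a::{division_ring,ring_char_0} mat"
  assumes "A 0 0 = 1" "A 0 1 = 0" "A 0 2 = 0" "A 1 0 = 0" "A 2 0 = 0" "A 1 1 \<noteq> 0"
  shows "pencil_rank_le 4 A B"
proof -
  define sw where "sw = (\<lambda>i::nat. if i = 0 then 1 else if i = 1 then 0 else i)"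
  have "pencil_rank_le 4 (\<lambda>i k. A (sw i) (sw k)) (\<lambda>i k. B (sw i) (sw k))"
  proof (rule pencil_rank_le_pivot)
    show "A (sw 0) (sw 0) \<noteq> 0" using assms by (simp add: sw_def)
    show "pencil_rank_le 4 (schur_reduce (\<lambda>i k. A (sw i) (sw k))) B'" for B'
      by (rule pencil_rank_le_cong[OF pencil_rank_le_diag_one_one
            [of "A 2 2 - A 2 1 * inverse (A 1 1) * A 1 2" B']])
        (use assms in \<open>auto simp: agree3_def schur_reduce_def sw_def diag3_def all_less_3\<close>)
  qed
  then show ?thesis
    by (rule pencil_rank_le_permute) (auto simp: sw_def all_less_3)
qed

lemma pencil_rank_le_reduced:
  fixes A :: "'a::{division_ring,ring_char_0} mat"
  assumes "A 0 0 = 1" "A 0 1 = 0" "A 0 2 = 0" "A 1 0 = 0" "A 2 0 = 0"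
  shows "pencil_rank_le 4 A B"
proof (cases "A 1 1 = 0 \<and> A 1 2 = 0 \<and> A 2 1 = 0 \<and> A 2 2 = 0")
  case True
  show ?thesis
    by (rule pencil_rank_le_cong[OF pencil_rank_le_unit00]) (use assms True in \<open>auto simp: agree3_def all_less_3\<close>)
next
  case False
  then obtain p q where pq: "p \<in> {1, 2}" "q \<in> {1, 2}" "A p q \<noteq> 0" by auto
  define sp where "sp = (\<lambda>i::nat. if i = 1 then p else if i = p then 1 else i)"
  define sq where "sq = (\<lambda>i::nat. if i = 1 then q else if i = q then 1 else i)"
  have "pencil_rank_le 4 (\<lambda>i k. A (sp i) (sq k)) (\<lambda>i k. B (sp i) (sq k))"
    by (rule pencil_rank_le_reduced_pivot11) (use assms pq in \<open>auto simp: sp_def sq_def\<close>)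
  then show ?thesis
    by (rule pencil_rank_le_permute) (use pq in \<open>auto simp: sp_def sq_def all_less_3\<close>)
qed

theorem pencil_rank_le_4:
  fixes A B :: "'a::{division_ring,ring_char_0} mat"
  shows "pencil_rank_le 4 A B"
proof (cases "\<exists>p<3. \<exists>q<3. A p q \<noteq> 0")
  case False
  show ?thesis
    by (rule pencil_rank_le_mono[OF pencil_rank_le_cong[OF pencil_rank_le_zero_left]])
      (use False in \<open>auto simp: agree3_def\<close>)
next
  case True
  then obtain p q where pq: "p < 3" "q < 3" "A p q \<noteq> 0" by blast
  define sp where "sp = (\<lambda>i::nat. if i = 0 then p else if i = p then 0 else i)"
  define sq where "sq = (\<lambda>i::nat. if i = 0 then q else if i = q then 0 else i)"
  have "pencil_rank_le 4 (\<lambda>i k. A (sp i) (sq k)) (\<lambda>i k. B (sp i) (sq k))"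
  proof (rule pencil_rank_le_pivot)
    show "A (sp 0) (sq 0) \<noteq> 0" using pq by (simp add: sp_def sq_def)
    show "pencil_rank_le 4 (schur_reduce (\<lambda>i k. A (sp i) (sq k))) B'" for B'
      by (rule pencil_rank_le_reduced) (simp_all add: schur_reduce_def)
  qed
  then show ?thesis
    by (rule pencil_rank_le_permute) (use pq in \<open>auto simp: sp_def sq_def all_less_3\<close>)
qed


instantiation quat :: division_ring
begin

definition "inverse q = (let n = (Re q)\<^sup>2 + (Im1 q)\<^sup>2 + (Im2 q)\<^sup>2 + (Im3 q)\<^sup>2 in
   Quat (Re q / n) (- Im1 q / n) (- Im2 q / n) (- Im3 q / n))"

definition "(x::quat) div y = x * inverse y"

instance
proof
  fix a :: quat
  assume "a \<noteq> 0"
  then have n: "Re a * Re a + Im1 a * Im1 a + Im2 a * Im2 a + Im3 a * Im3 a \<noteq> 0"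
    by (auto simp: quat_eq_iff zero_quat_def add_nonneg_eq_0_iff)
  then have "(Re a * Re a + Im1 a * Im1 a + Im2 a * Im2 a + Im3 a * Im3 a)
      / (Re a * Re a + Im1 a * Im1 a + Im2 a * Im2 a + Im3 a * Im3 a) = 1"
    by simp
  with n show "inverse a * a = 1" "a * inverse a = 1"
    by (simp_all add: inverse_quat_def times_quat_def one_quat_def quat_eq_iff power2_eq_square Let_def
        add_divide_distrib[symmetric] diff_divide_distrib[symmetric] algebra_simps)
next
  show "a div b = a * inverse b" for a b :: quat
    by (simp add: divide_quat_def)
  show "inverse (0::quat) = 0"
    by (simp add: inverse_quat_def zero_quat_def)
qed

end

instance quat :: ring_char_0
proof
  have "Re (of_nat n :: quat) = of_nat n" for n
    by (induction n) (simp_all add: zero_quat_def one_quat_def plus_quat_def)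
  then show "inj (of_nat :: nat \<Rightarrow> quat)"
    by (metis injI of_nat_eq_iff)
qed

lemma sum_of_simple_of_decomposition:
  assumes "\<forall>i<n1. \<forall>j<n2. \<forall>k<n3. T i j k = (\<Sum>l<r. a l i * b l j * c l k)"
  shows "\<exists>r'\<le>r. sum_of_simple n1 n2 n3 r' T"
  using assms
proof (induction r arbitrary: T)
  case 0
  then have "sum_of_simple n1 n2 n3 0 T"
    unfolding sum_of_simple_def by simp
  then show ?case by blast
next
  case (Suc r)
  define X where "X = (\<lambda>i j k. a r i * b r j * c r k)"
  obtain r' S where r': "r' \<le> r" "\<forall>l<r'. is_simple_tensor n1 n2 n3 (S l)"
      "\<forall>i<n1. \<forall>j<n2. \<forall>k<n3. (\<Sum>l<r. a l i * b l j * c l k) = (\<Sum>l<r'. S l i j k)"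
    using Suc.IH[of "\<lambda>i j k. \<Sum>l<r. a l i * b l j * c l k"] unfolding sum_of_simple_def by auto
  have T: "\<forall>i<n1. \<forall>j<n2. \<forall>k<n3. T i j k = (\<Sum>l<r'. S l i j k) + X i j k"
    using Suc.prems r'(3) by (simp add: X_def)
  show ?case
  proof (cases "\<exists>i<n1. \<exists>j<n2. \<exists>k<n3. X i j k \<noteq> 0")
    case False
    then have "sum_of_simple n1 n2 n3 r' T"
      unfolding sum_of_simple_def using r'(2) T by (intro exI[where x=S]) auto
    then show ?thesis
      using r'(1) by (intro exI[where x=r']) simp
  next
    case True
    then have "is_simple_tensor n1 n2 n3 X"
      unfolding is_simple_tensor_def X_def by blast
    then have "sum_of_simple n1 n2 n3 (Suc r') T"
      unfolding sum_of_simple_def using r'(2) T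
      by (intro exI[where x="S(r' := X)"]) (auto simp: less_Suc_eq)
    then show ?thesis
      using r'(1) by (intro exI[where x="Suc r'"]) simp
  qed
qed

lemma tensor_rank_le_of_decomposition:
  assumes "\<forall>i<n1. \<forall>j<n2. \<forall>k<n3. T i j k = (\<Sum>l<r. a l i * b l j * c l k)"
  shows "tensor_rank n1 n2 n3 T \<le> r"
  using sum_of_simple_of_decomposition[OF assms] unfolding tensor_rank_def
  by (meson Least_le le_trans)

theorem mainTheorem12:
  fixes T :: "nat \<Rightarrow> nat \<Rightarrow> nat \<Rightarrow> quat"
  shows "tensor_rank 3 2 3 T \<le> 4"
proof -
  obtain a c \<beta> \<gamma> where slices: "\<forall>i<3. \<forall>k<3.
      T i 0 k = (\<Sum>l<4::nat. a l i * \<beta> l * c l k) \<and> T i 1 k = (\<Sum>l<4. a l i * \<gamma> l * c l k)"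
    using pencil_rank_le_4[of "\<lambda>i k. T i 0 k" "\<lambda>i k. T i 1 k"] by (rule pencil_rank_leE)
  define b where "b = (\<lambda>l j::nat. if j = 0 then \<beta> l else \<gamma> l)"
  have "\<forall>i<3. \<forall>j<2. \<forall>k<3. T i j k = (\<Sum>l<4. a l i * b l j * c l k)"
    using slices by (auto simp: b_def less_2_cases_iff)
  then show ?thesis
    by (rule tensor_rank_le_of_decomposition)
qed

end
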